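(* Let $f(x,y)=x^2y$. If $\{x^2y : x,y\in\widetilde C\} = [\tfrac{8}{27},1]$, then $\{x^2y : x,y\in C\} = [0,1]$.
   Context: $C=\{\sum_{k\ge1}\alpha_k3^{-k}:\alpha_k\in\{0,2\}\}$ is the middle-thirds Cantor set, and $\widetilde C = C\cap[\tfrac23,1]$. *)

theory Defs
  imports "HOL-Analysis.Analysis"
begin

text \<open>Middle-thirds Cantor set: numbers sum_{k>=1} a_k 3^{-k} with a_k in {0,2}.
  Digits are indexed from 0: a k corresponds to alpha_{k+1}.\<close>
definition cantor_set :: "real set" where
  "cantor_set = {x. \<exists>a::nat \<Rightarrow> real. (\<forall>k. a k \<in> {0, 2}) \<and>
                      x = (\<Sum>k. a k / 3 ^ (Suc k))}"

definition cantor_tilde :: "real set" where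
  "cantor_tilde = cantor_set \<inter> {2/3..1}"

end

theory Submission
  imports Defs
begin

text \<open>Every \<open>t \<in> (0,1]\<close> is \<open>3\<^sup>-\<^sup>n s\<close> with \<open>s \<in> [1/3,1] \<subseteq> [8/27,1]\<close>, and
  \<open>x\<^sup>2 y / 3\<^sup>n = x\<^sup>2 (y / 3\<^sup>n)\<close>, where \<open>y / 3\<^sup>n\<close> stays in \<open>C\<close> (prepend \<open>n\<close> zero digits);
  \<open>0 = 0\<^sup>2 \<cdot> 0\<close> handles the remaining point.\<close>

lemma sums_two_over_powers_of_three: "(\<lambda>k::nat. 2 / 3 ^ Suc k) sums (1::real)"
proof -
  have "(\<lambda>k::nat. (2/3) * (1/3::real) ^ k) sums ((2/3) * (1 / (1 - 1/3)))"
    by (intro sums_mult geometric_sums) simp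
  thus ?thesis by (simp add: power_divide field_simps)
qed

lemma cantor_digit_bounds:
  assumes "a k \<in> {0, 2::real}"
  shows "0 \<le> a k" "a k \<le> 2"
  using assms by auto

lemma summable_cantor_digits:
  assumes "\<forall>k. a k \<in> {0, 2::real}"
  shows "summable (\<lambda>k. a k / 3 ^ Suc k)"
proof (rule summable_comparison_test[OF _ sums_summable[OF sums_two_over_powers_of_three]])
  show "\<exists>N. \<forall>n\<ge>N. norm (a n / 3 ^ Suc n) \<le> 2 / 3 ^ Suc n"
    using cantor_digit_bounds[of a] assms by (auto intro!: divide_right_mono)
qed

lemma cantor_set_subset: "cantor_set \<subseteq> {0..1}"
proof
  fix x assume "x \<in> cantor_set"
  then obtain a where a: "\<forall>k. a k \<in> {0, 2::real}" and x: "x = (\<Sum>k. a k / 3 ^ Suc k)"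
    unfolding cantor_set_def by blast
  note s = summable_cantor_digits[OF a]
  have "0 \<le> x"
    unfolding x using cantor_digit_bounds[of a] a by (intro suminf_nonneg[OF s]) auto
  moreover have "x \<le> (\<Sum>k. 2 / 3 ^ Suc k)"
    unfolding x using cantor_digit_bounds[of a] a
    by (intro suminf_le[OF _ s sums_summable[OF sums_two_over_powers_of_three]])
       (auto intro: divide_right_mono)
  ultimately show "x \<in> {0..1}"
    using sums_unique[OF sums_two_over_powers_of_three] by simp
qed

lemma zero_in_cantor_set: "0 \<in> cantor_set"
  unfolding cantor_set_def by (rule CollectI, rule exI[of _ "\<lambda>_. 0"]) simp

lemma cantor_set_divide_three:
  assumes "y \<in> cantor_set"
  shows "y / 3 \<in> cantor_set"
proof -
  obtain a where a: "\<forall>k. a k \<in> {0, 2::real}" and y: "y = (\<Sum>k. a k / 3 ^ Suc k)"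
    using assms unfolding cantor_set_def by blast
  define b where "b = case_nat 0 a"
  have b: "\<forall>k. b k \<in> {0, 2::real}"
    using a by (auto simp: b_def split: nat.split)
  have "(\<lambda>k. a k / 3 ^ Suc k / 3) sums (y / 3)"
    using summable_cantor_digits[OF a] y by (intro sums_divide) (simp add: summable_sums)
  hence "(\<lambda>k. b (Suc k) / 3 ^ Suc (Suc k)) sums (y / 3)"
    by (simp add: b_def mult.commute)
  hence "(\<lambda>k. b k / 3 ^ Suc k) sums (y / 3)"
    by (subst (asm) sums_Suc_iff) (simp add: b_def)
  thus ?thesis
    unfolding cantor_set_def using b sums_unique by blast
qed

lemma half_open_unit_interval_subset_if_scaling_closed:
  fixes q :: real
  assumes "0 < q" "q < 1" "{q..1} \<subseteq> S" "\<And>t. t \<in> S \<Longrightarrow> q * t \<in> S"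
  shows "{0<..1} \<subseteq> S"
proof -
  have "t \<in> S" if "q ^ n < t" "t \<le> 1" for n t
    using that
  proof (induction n arbitrary: t)
    case 0 thus ?case by simp
  next
    case (Suc n)
    show ?case
    proof (cases "q \<le> t")
      case True
      thus ?thesis using assms(3) Suc.prems by auto
    next
      case False
      have "q ^ n < t / q" "t / q \<le> 1"
        using Suc.prems False assms(1) by (auto simp: field_simps)
      hence "q * (t / q) \<in> S" using Suc.IH assms(4) by blast
      thus ?thesis using assms(1) by simp
    qed
  qed
  moreover have "\<exists>n. q ^ n < t" if "0 < t" for t
    using real_arch_pow_inv[OF that assms(2)] .
  ultimately show ?thesis by force
qed

theorem lemma3p3:
  assumes "{x^2 * y | x y. x \<in> cantor_tilde \<and> y \<in> cantor_tilde} = {8/27..(1::real)}"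
  shows "{x^2 * y | x y. x \<in> cantor_set \<and> y \<in> cantor_set} = {0..(1::real)}"
proof
  show "{x^2 * y | x y. x \<in> cantor_set \<and> y \<in> cantor_set} \<subseteq> {0..1}"
    using cantor_set_subset by (force intro: mult_le_one power_le_one)
next
  define S where "S = {x^2 * y | x y. x \<in> cantor_set \<and> y \<in> cantor_set}"
  have "{8/27..1} \<subseteq> S"
    unfolding S_def assms[symmetric] cantor_tilde_def by blast
  moreover have "t / 3 \<in> S" if "t \<in> S" for t
    using that cantor_set_divide_three unfolding S_def by force
  ultimately have pos: "{0<..1} \<subseteq> S"
    by (intro half_open_unit_interval_subset_if_scaling_closed[of "1/3"]) auto
  have zero: "0 \<in> S"
    unfolding S_def using zero_in_cantor_set by force
  show "{0..1} \<subseteq> S"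
  proof
    fix t :: real assume "t \<in> {0..1}"
    thus "t \<in> S" using pos zero by (cases "t = 0") auto
  qed
qed

end
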